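(* Let $\beta>0$ and $t$ a positive integer. Suppose that for each $k=0,1,\dots,t$ the following hold: $\tilde{\boldsymbol{w}}^k=(\tilde{\boldsymbol{x}}^k,\tilde{\boldsymbol{\lambda}}^k)\in\Omega$ satisfies $f(\boldsymbol{x})-f(\tilde{\boldsymbol{x}}^k)+(\boldsymbol{w}-\tilde{\boldsymbol{w}}^k)^T\boldsymbol{\Gamma}(\tilde{\boldsymbol{w}}^k)\ge(\boldsymbol{w}-\tilde{\boldsymbol{w}}^k)^T\boldsymbol{Q}_k(\boldsymbol{w}^k-\tilde{\boldsymbol{w}}^k)$ for all $\boldsymbol{w}\in\Omega$; $\boldsymbol{M}_k$ is invertible with $\boldsymbol{H}_k=\boldsymbol{Q}_k\boldsymbol{M}_k^{-1}$ symmetric positive definite and $\boldsymbol{G}_k=\boldsymbol{Q}_k^T+\boldsymbol{Q}_k-\beta\boldsymbol{M}_k^T\boldsymbol{H}_k\boldsymbol{M}_k\succ0$; and $\boldsymbol{w}^{k+1}=\boldsymbol{w}^k-\beta\boldsymbol{M}_k(\boldsymbol{w}^k-\tilde{\boldsymbol{w}}^k)$. Suppose also $\boldsymbol{H}_{k-1}-\boldsymbol{H}_k\succeq0$ for $k=1,\dots,t$. Let $\tilde{\boldsymbol{x}}_t=\frac1{1+t}\sum_{k=0}^t\tilde{\boldsymbol{x}}^k$, $\tilde{\boldsymbol{w}}_t=\frac1{1+t}\sum_{k=0}^t\tilde{\boldsymbol{w}}^k$. Then $\tilde{\boldsymbol{w}}_t\in\Omega$ and $$f(\tilde{\boldsymbol{x}}_t)-f(\boldsymbol{x})+(\tilde{\boldsymbol{w}}_t-\boldsymbol{w})^T\boldsymbol{\Gamma}(\boldsymbol{w})\le\frac{1}{2\beta(1+t)}\|\boldsymbol{w}-\boldsymbol{w}^0\|_{\boldsymbol{H}_0}^2\quad\text{for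 all }\boldsymbol{w}=(\boldsymbol{x},\boldsymbol{\lambda})\in\Omega.$$
   Context: $\mathcal{X}\subset\mathbb{R}^n$ nonempty closed convex; $f:\mathbb{R}^n\to\mathbb{R}$ convex; $\phi_1,\dots,\phi_m$ convex and continuously differentiable; $\Phi=(\phi_1,\dots,\phi_m)^T$ with $m\times n$ Jacobian $\mathcal{D}\Phi$; $\Omega=\mathcal{X}\times\mathbb{R}^m_+$; $\boldsymbol{\Gamma}(\boldsymbol{w})=(\mathcal{D}\Phi(\boldsymbol{x})^T\boldsymbol{\lambda},-\Phi(\boldsymbol{x}))$. For $r_k,s_k>0$, $\boldsymbol{Q}_k=\begin{pmatrix} r_k\boldsymbol{I}_n & -\mathcal{D}\Phi(\tilde{\boldsymbol{x}}^k)^T\\ \boldsymbol{0} & s_k\boldsymbol{I}_m\end{pmatrix}$. $\|\boldsymbol{v}\|_{\boldsymbol{H}}^2=\boldsymbol{v}^T\boldsymbol{H}\boldsymbol{v}$. *)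

theory Defs
  imports "HOL-Analysis.Analysis"
begin

text \<open>Vectors w = (x, lambda) in R^(n+m) are indexed by the sum type 'n + 'm.\<close>

definition wjoin :: "real^'n::finite \<Rightarrow> real^'m::finite \<Rightarrow> real^('n + 'm)" where
  "wjoin x l = (\<chi> i. case i of Inl j \<Rightarrow> x $ j | Inr j \<Rightarrow> l $ j)"

definition wx :: "real^('n::finite + 'm::finite) \<Rightarrow> real^'n" where
  "wx w = (\<chi> j. w $ Inl j)"

definition wl :: "real^('n::finite + 'm::finite) \<Rightarrow> real^'m" where
  "wl w = (\<chi> j. w $ Inr j)"

definition Omega :: "(real^'n::finite) set \<Rightarrow> (real^('n + 'm::finite)) set" where
  "Omega X = {w. wx w \<in> X \<and> (\<forall>j. 0 \<le> wl w $ j)}"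

definition Gamma :: "(real^'n::finite \<Rightarrow> real^'m::finite) \<Rightarrow> (real^'n \<Rightarrow> real^'n^'m)
                     \<Rightarrow> real^('n + 'm) \<Rightarrow> real^('n + 'm)" where
  "Gamma Phi DPhi w = wjoin (transpose (DPhi (wx w)) *v wl w) (- Phi (wx w))"

text \<open>Q = [[r I_n, -J^T],[0, s I_m]] with J the m x n Jacobian.\<close>
definition Qmat :: "real \<Rightarrow> real \<Rightarrow> real^'n::finite^'m::finite \<Rightarrow> real^('n + 'm)^('n + 'm)" where
  "Qmat r s J = (\<chi> i k. case (i, k) of
      (Inl a, Inl b) \<Rightarrow> (if a = b then r else 0)
    | (Inl a, Inr b) \<Rightarrow> - (transpose J $ a $ b)
    | (Inr a, Inl b) \<Rightarrow> 0
    | (Inr a, Inr b) \<Rightarrow> (if a = b then s else 0))"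

definition wnorm2 :: "real^'i^'i \<Rightarrow> real^'i \<Rightarrow> real" where
  "wnorm2 H v = v \<bullet> (H *v v)"

definition symmetric_mat :: "real^'i^'i \<Rightarrow> bool" where
  "symmetric_mat A \<longleftrightarrow> transpose A = A"

definition pos_def_mat :: "real^'i^'i \<Rightarrow> bool" where
  "pos_def_mat A \<longleftrightarrow> (\<forall>v. v \<noteq> 0 \<longrightarrow> v \<bullet> (A *v v) > 0)"

definition pos_semidef_mat :: "real^'i^'i \<Rightarrow> bool" where
  "pos_semidef_mat A \<longleftrightarrow> (\<forall>v. v \<bullet> (A *v v) \<ge> 0)"

end

theory Submission
  imports Defs
begin

text \<open>The variational inequality at the predictor, combined with the
  monotonicity of Gamma (which comes from the convexity of the components of Phi and l >= 0),
  bounds the k-th gap f(x~k) - f(x) + (w~k - w) Gamma(w) by -(w - w~k) Q_k (w^k - w~k).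
  Writing Q_k = H_k M_k and inserting the corrector step, that term equals
  (|w - w^k|_{H_k}^2 - |w - w^{k+1}|_{H_k}^2) / (2 beta) - |w^k - w~k|_{G_k}^2 / 2.
  Since H_{k+1} <= H_k the sum over k telescopes to at most |w - w^0|_{H_0}^2 / (2 beta), and
  Jensen's inequality for f (the Gamma term is affine in the predictor) passes from the mean
  of the gaps to the gap at the mean.\<close>

lemma convex_on_ge_linearization:
  fixes g :: "'a::real_normed_vector \<Rightarrow> real"
  assumes convex: "convex_on UNIV g" and deriv: "(g has_derivative g') (at x)"
  shows "g x + g' (y - x) \<le> g y"
proof -
  define h where "h = (\<lambda>u::real. g (x + u *\<^sub>R (y - x)))"
  have "convex_on UNIV h"
  proof (rule convex_onI)
    fix u a b :: real
    have "x + ((1 - u) *\<^sub>R a + u *\<^sub>R b) *\<^sub>R (y - x)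
        = (1 - u) *\<^sub>R (x + a *\<^sub>R (y - x)) + u *\<^sub>R (x + b *\<^sub>R (y - x))"
      by (simp add: algebra_simps)
    moreover assume "0 < u" "u < 1"
    ultimately show "h ((1 - u) *\<^sub>R a + u *\<^sub>R b) \<le> (1 - u) * h a + u * h b"
      unfolding h_def using convex_onD[OF convex, of u] by simp
  qed simp
  moreover have "(h has_field_derivative g' (y - x)) (at 0)"
  proof -
    have "((\<lambda>u. x + u *\<^sub>R (y - x)) has_derivative (\<lambda>u. u *\<^sub>R (y - x))) (at 0)"
      by (auto intro!: derivative_eq_intros)
    from has_derivative_compose[OF this, of g g'] deriv
    have "(h has_derivative (\<lambda>u. g' (u *\<^sub>R (y - x)))) (at 0)"
      by (simp add: h_def o_def)
    moreover have "g' (u *\<^sub>R (y - x)) = g' (y - x) * u" for u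
      using linear_scale[OF has_derivative_linear[OF deriv]] by simp
    ultimately show ?thesis by (simp add: has_field_derivative_def mult_commute_abs)
  qed
  ultimately have "g' (y - x) * (1 - 0) \<le> h 1 - h 0"
    by (intro convex_on_imp_above_tangent) auto
  then show ?thesis by (simp add: h_def)
qed

lemma inner_transpose_mult:
  fixes A :: "real^'i::finite^'j::finite"
  shows "x \<bullet> (transpose A *v y) = (A *v x) \<bullet> y"
proof -
  have "x \<bullet> (transpose A *v y) = (y v* A) \<bullet> x"
    by (simp add: inner_commute[of x])
  also have "\<dots> = y \<bullet> (A *v x)"
    by (rule dot_lmul_matrix)
  finally show ?thesis
    by (simp add: inner_commute)
qed

lemma inner_nonneg_vec:
  fixes a b :: "real^'i::finite"
  assumes "\<And>j. 0 \<le> a $ j" "\<And>j. 0 \<le> b $ j"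
  shows "0 \<le> a \<bullet> b"
  unfolding inner_vec_def using assms by (auto intro!: sum_nonneg)

lemma symmetric_mat_inner_commute:
  fixes H :: "real^'i::finite^'i"
  assumes "symmetric_mat H"
  shows "x \<bullet> (H *v y) = y \<bullet> (H *v x)"
  using inner_transpose_mult[of x H y] assms
  by (simp add: symmetric_mat_def inner_commute del: transpose_matrix_vector)

lemma matrix_inv_left:
  fixes A :: "real^'n::finite^'n"
  assumes "invertible A"
  shows "matrix_inv A ** A = mat 1"
proof -
  have "\<exists>A'. A ** A' = mat 1 \<and> A' ** A = mat 1"
    using assms by (simp add: invertible_def)
  from someI_ex[OF this] show ?thesis
    by (simp add: matrix_inv_def)
qed

lemma pos_def_imp_pos_semidef_mat: "pos_def_mat A \<Longrightarrow> pos_semidef_mat A"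
  unfolding pos_def_mat_def pos_semidef_mat_def
  by (metis inner_zero_left order.refl order.strict_implies_order)

lemma wnorm2_nonneg: "pos_semidef_mat A \<Longrightarrow> 0 \<le> wnorm2 A z"
  by (simp add: pos_semidef_mat_def wnorm2_def)

lemma wnorm2_diff_mat: "wnorm2 (A - B) z = wnorm2 A z - wnorm2 B z"
  by (simp add: wnorm2_def matrix_vector_mult_diff_rdistrib inner_diff_right)

lemma wx_wjoin [simp]: "wx (wjoin x l) = x"
  by (simp add: wx_def wjoin_def)
lemma wl_wjoin [simp]: "wl (wjoin x l) = l"
  by (simp add: wl_def wjoin_def)
lemma wx_add [simp]: "wx (a + b) = wx a + wx b"
  by (simp add: wx_def vec_eq_iff)
lemma wl_add [simp]: "wl (a + b) = wl a + wl b"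
  by (simp add: wl_def vec_eq_iff)
lemma wx_diff [simp]: "wx (a - b) = wx a - wx b"
  by (simp add: wx_def vec_eq_iff)
lemma wl_diff [simp]: "wl (a - b) = wl a - wl b"
  by (simp add: wl_def vec_eq_iff)
lemma wx_scaleR [simp]: "wx (c *\<^sub>R a) = c *\<^sub>R wx a"
  by (simp add: wx_def vec_eq_iff)
lemma wl_scaleR [simp]: "wl (c *\<^sub>R a) = c *\<^sub>R wl a"
  by (simp add: wl_def vec_eq_iff)

lemma inner_wx_wl: "u \<bullet> v = wx u \<bullet> wx v + wl u \<bullet> wl v"
proof -
  have "u \<bullet> v = (\<Sum>i\<in>UNIV <+> UNIV. u $ i * v $ i)"
    by (simp add: inner_vec_def)
  also have "\<dots> = (\<Sum>j\<in>UNIV. u $ Inl j * v $ Inl j) + (\<Sum>j\<in>UNIV. u $ Inr j * v $ Inr j)"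
    by (subst sum.Plus) (auto simp: o_def)
  finally show ?thesis
    by (simp add: inner_vec_def wx_def wl_def)
qed

lemma wx_Gamma [simp]: "wx (Gamma Phi DPhi w) = transpose (DPhi (wx w)) *v wl w"
  by (simp add: Gamma_def del: transpose_matrix_vector)
lemma wl_Gamma [simp]: "wl (Gamma Phi DPhi w) = - Phi (wx w)"
  by (simp add: Gamma_def)

lemma convex_Omega:
  assumes "convex X"
  shows "convex (Omega X :: (real^('n::finite + 'm::finite)) set)"
proof (rule convexI)
  fix v w :: "real^('n + 'm)" and u1 u2 :: real
  assume "v \<in> Omega X" "w \<in> Omega X" "0 \<le> u1" "0 \<le> u2" "u1 + u2 = 1"
  then show "u1 *\<^sub>R v + u2 *\<^sub>R w \<in> Omega X"
    using convexD[OF assms] by (auto simp: Omega_def intro!: add_nonneg_nonneg)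
qed

lemma Gamma_monotone:
  fixes Phi :: "real^'n::finite \<Rightarrow> real^'m::finite"
  assumes Phi_convex: "\<And>i. convex_on UNIV (\<lambda>x. Phi x $ i)"
    and Phi_deriv: "\<And>x. (Phi has_derivative (\<lambda>h. DPhi x *v h)) (at x)"
    and "\<And>j. 0 \<le> l $ j" and "\<And>j. 0 \<le> m $ j"
  shows "0 \<le> (wjoin x l - wjoin y m) \<bullet> (Gamma Phi DPhi (wjoin x l) - Gamma Phi DPhi (wjoin y m))"
proof -
  have linearization: "Phi u + DPhi u *v (v - u) \<le> Phi v" for u v
    unfolding less_eq_vec_def
    using convex_on_ge_linearization[OF Phi_convex
        bounded_linear.has_derivative[OF bounded_linear_vec_nth Phi_deriv]]
    by simp
  have "(wjoin x l - wjoin y m) \<bullet> (Gamma Phi DPhi (wjoin x l) - Gamma Phi DPhi (wjoin y m))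
      = (x - y) \<bullet> (transpose (DPhi x) *v l) - (x - y) \<bullet> (transpose (DPhi y) *v m)
        + (l - m) \<bullet> (Phi y - Phi x)"
    by (simp add: inner_wx_wl inner_diff_left inner_diff_right algebra_simps
        del: transpose_matrix_vector)
  also have "\<dots> = l \<bullet> (Phi y - (Phi x + DPhi x *v (y - x))) + m \<bullet> (Phi x - (Phi y + DPhi y *v (x - y)))"
    unfolding inner_transpose_mult
    by (simp add: inner_diff_left inner_diff_right inner_add_right inner_commute
        matrix_vector_mult_diff_distrib algebra_simps)
  also have "\<dots> \<ge> 0"
    using assms(3,4) linearization[of x y] linearization[of y x]
    by (intro add_nonneg_nonneg inner_nonneg_vec) (auto simp: less_eq_vec_def)
  finally show ?thesis .
qed

lemma correction_step_identity:
  fixes H M Q :: "real^'i::finite^'i"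
  assumes beta: "beta \<noteq> 0" and H: "symmetric_mat H" and QHM: "Q = H ** M"
    and w1: "w1 = w0 - beta *\<^sub>R (M *v (w0 - wt))"
  shows "(a - wt) \<bullet> (Q *v (w0 - wt))
    = 1 / (2 * beta) * (wnorm2 H (a - w1) - wnorm2 H (a - w0))
      + 1 / 2 * wnorm2 (transpose Q + Q - beta *\<^sub>R (transpose M ** H ** M)) (w0 - wt)"
proof -
  define v where "v = w0 - wt"
  define u where "u = M *v v"
  define b where "b = a - w0"
  have Qv: "Q *v v = H *v u"
    by (simp add: QHM u_def matrix_vector_mul_assoc)
  have "wnorm2 (transpose Q + Q - beta *\<^sub>R (transpose M ** H ** M)) v
      = v \<bullet> (transpose Q *v v) + v \<bullet> (Q *v v) - beta * (v \<bullet> ((transpose M ** H ** M) *v v))"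
    by (simp add: wnorm2_def matrix_vector_mult_diff_rdistrib matrix_vector_mult_add_rdistrib
        inner_diff_right inner_add_right scaleR_matrix_vector_assoc[symmetric]
        del: transpose_matrix_vector)
  also have "v \<bullet> (transpose Q *v v) = v \<bullet> (Q *v v)"
    by (simp add: inner_transpose_mult inner_commute del: transpose_matrix_vector)
  also have "v \<bullet> ((transpose M ** H ** M) *v v) = u \<bullet> (H *v u)"
    by (simp add: u_def inner_transpose_mult matrix_vector_mul_assoc[symmetric]
        del: transpose_matrix_vector)
  finally have G: "wnorm2 (transpose Q + Q - beta *\<^sub>R (transpose M ** H ** M)) v
      = 2 * (v \<bullet> (H *v u)) - beta * (u \<bullet> (H *v u))"
    by (simp add: Qv)
  have "a - w1 = b + beta *\<^sub>R u"
    by (simp add: b_def u_def v_def w1)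
  then have "wnorm2 H (a - w1) = wnorm2 H b + 2 * beta * (b \<bullet> (H *v u)) + beta^2 * (u \<bullet> (H *v u))"
    using symmetric_mat_inner_commute[OF H, of u b]
    by (simp add: wnorm2_def matrix_vector_right_distrib inner_add_left inner_add_right
        power2_eq_square algebra_simps)
  moreover have "(a - wt) \<bullet> (Q *v (w0 - wt)) = b \<bullet> (H *v u) + v \<bullet> (H *v u)"
  proof -
    have "a - wt = b + v"
      by (simp add: b_def v_def)
    then show ?thesis
      by (simp add: v_def[symmetric] Qv inner_add_left)
  qed
  ultimately show ?thesis
    using beta unfolding G v_def[symmetric] b_def[symmetric]
    by (simp add: wnorm2_def field_simps power2_eq_square)
qed

lemma iteration_gap_le:
  fixes f :: "real^'n::finite \<Rightarrow> real" and Phi :: "real^'n \<Rightarrow> real^'m::finite"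
    and H M Q :: "real^('n + 'm)^('n + 'm)"
  assumes Phi_convex: "\<And>i. convex_on UNIV (\<lambda>x. Phi x $ i)"
    and Phi_deriv: "\<And>x. (Phi has_derivative (\<lambda>h. DPhi x *v h)) (at x)"
    and beta: "beta > 0"
    and wt: "wjoin xt lt \<in> Omega X" and w: "wjoin x l \<in> Omega X"
    and VI: "(wjoin x l - wjoin xt lt) \<bullet> (Q *v (w0 - wjoin xt lt))
      \<le> f x - f xt + (wjoin x l - wjoin xt lt) \<bullet> Gamma Phi DPhi (wjoin xt lt)"
    and H: "symmetric_mat H" and QHM: "Q = H ** M"
    and G: "pos_semidef_mat (transpose Q + Q - beta *\<^sub>R (transpose M ** H ** M))"
    and w1: "w1 = w0 - beta *\<^sub>R (M *v (w0 - wjoin xt lt))"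
  shows "f xt - f x + (wjoin xt lt - wjoin x l) \<bullet> Gamma Phi DPhi (wjoin x l)
    \<le> 1 / (2 * beta) * (wnorm2 H (wjoin x l - w0) - wnorm2 H (wjoin x l - w1))"
proof -
  let ?w = "wjoin x l" and ?wt = "wjoin xt lt"
  have "0 \<le> (?w - ?wt) \<bullet> (Gamma Phi DPhi ?w - Gamma Phi DPhi ?wt)"
    using w wt by (intro Gamma_monotone[OF Phi_convex Phi_deriv]) (auto simp: Omega_def)
  then have "f xt - f x + (?wt - ?w) \<bullet> Gamma Phi DPhi ?w
      \<le> - (f x - f xt + (?w - ?wt) \<bullet> Gamma Phi DPhi ?wt)"
    by (simp add: inner_diff_left inner_diff_right inner_commute)
  also have "\<dots> \<le> - ((?w - ?wt) \<bullet> (Q *v (w0 - ?wt)))"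
    using VI by simp
  also have "\<dots> \<le> 1 / (2 * beta) * (wnorm2 H (?w - w0) - wnorm2 H (?w - w1))"
    using correction_step_identity[OF _ H QHM w1, of ?w] wnorm2_nonneg[OF G, of "w0 - ?wt"] beta
    by (simp add: right_diff_distrib)
  finally show ?thesis .
qed

lemma sum_atMost_diff_le_telescope:
  fixes a b :: "nat \<Rightarrow> 'a::linordered_ab_group_add"
  assumes "\<And>k. k < n \<Longrightarrow> a (Suc k) \<le> b k"
  shows "(\<Sum>k\<le>n. a k - b k) \<le> a 0 - b n"
  using assms
proof (induction n)
  case (Suc n)
  then have "(\<Sum>k\<le>n. a k - b k) + (a (Suc n) - b (Suc n)) \<le> (a 0 - b n) + (b n - b (Suc n))"
    by (intro add_mono) auto
  then show ?case
    by simp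
qed simp

lemma sum_wnorm2_telescope_le:
  assumes mono: "\<And>k. k < t \<Longrightarrow> pos_semidef_mat (H k - H (Suc k))"
    and last: "pos_semidef_mat (H t)"
  shows "(\<Sum>k\<le>t. wnorm2 (H k) (z - w k) - wnorm2 (H k) (z - w (Suc k))) \<le> wnorm2 (H 0) (z - w 0)"
proof -
  have "(\<Sum>k\<le>t. wnorm2 (H k) (z - w k) - wnorm2 (H k) (z - w (Suc k)))
      \<le> wnorm2 (H 0) (z - w 0) - wnorm2 (H t) (z - w (Suc t))"
  proof (rule sum_atMost_diff_le_telescope)
    fix k assume "k < t"
    then show "wnorm2 (H (Suc k)) (z - w (Suc k)) \<le> wnorm2 (H k) (z - w (Suc k))"
      using wnorm2_nonneg[OF mono, of k "z - w (Suc k)"] by (simp add: wnorm2_diff_mat)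
  qed
  also have "\<dots> \<le> wnorm2 (H 0) (z - w 0)"
    using wnorm2_nonneg[OF last] by simp
  finally show ?thesis .
qed

lemma convex_mean_gap_le:
  fixes f :: "'a::real_vector \<Rightarrow> real" and w :: "nat \<Rightarrow> 'b::real_inner"
  assumes "convex_on UNIV f"
  shows "f ((1 / (1 + real t)) *\<^sub>R (\<Sum>k\<le>t. x k)) - f y + ((1 / (1 + real t)) *\<^sub>R (\<Sum>k\<le>t. w k) - v) \<bullet> g
    \<le> (1 / (1 + real t)) * (\<Sum>k\<le>t. f (x k) - f y + (w k - v) \<bullet> g)"
proof -
  define c where "c = 1 / (1 + real t)"
  have c: "0 < c" "(\<Sum>k\<le>t. c) = 1"
    by (simp_all add: c_def)
  have "f (\<Sum>k\<le>t. c *\<^sub>R x k) \<le> (\<Sum>k\<le>t. c * f (x k))"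
    using c by (intro convex_on_sum[OF _ _ assms]) auto
  moreover have "(\<Sum>k\<le>t. c * (f y + v \<bullet> g)) = f y + v \<bullet> g"
    using c by (simp flip: sum_distrib_right)
  ultimately show ?thesis
    unfolding c_def[symmetric]
    by (simp add: scaleR_sum_right sum_distrib_left inner_sum_left inner_diff_left
        sum.distrib sum_subtractf algebra_simps)
qed

theorem theorem5:
  fixes X :: "(real^'n) set"
    and f :: "real^'n \<Rightarrow> real"
    and Phi :: "real^'n \<Rightarrow> real^'m"
    and DPhi :: "real^'n \<Rightarrow> real^'n^'m"
    and beta :: real and t :: nat
    and r s :: "nat \<Rightarrow> real"
    and xt :: "nat \<Rightarrow> real^'n" and lt :: "nat \<Rightarrow> real^'m"
    and w :: "nat \<Rightarrow> real^('n + 'm)"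
    and M :: "nat \<Rightarrow> real^('n + 'm)^('n + 'm)"
    and Q H G :: "nat \<Rightarrow> real^('n + 'm)^('n + 'm)"
  assumes X_ne: "X \<noteq> {}" and X_closed: "closed X" and X_convex: "convex X"
    and f_convex: "convex_on UNIV f"
    and Phi_convex: "\<And>i. convex_on UNIV (\<lambda>x. Phi x $ i)"
    and Phi_deriv: "\<And>x. (Phi has_derivative (\<lambda>h. DPhi x *v h)) (at x)"
    and DPhi_cont: "continuous_on UNIV DPhi"
    and beta_pos: "beta > 0" and t_pos: "t \<ge> 1"
    and rs_pos: "\<And>k. k \<le> t \<Longrightarrow> r k > 0 \<and> s k > 0"
    and Q_def: "\<And>k. Q k = Qmat (r k) (s k) (DPhi (xt k))"
    and in_Omega: "\<And>k. k \<le> t \<Longrightarrow> wjoin (xt k) (lt k) \<in> Omega X"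
    and VI: "\<And>k x l. k \<le> t \<Longrightarrow> wjoin x l \<in> Omega X \<Longrightarrow>
        f x - f (xt k) + (wjoin x l - wjoin (xt k) (lt k)) \<bullet> Gamma Phi DPhi (wjoin (xt k) (lt k))
        \<ge> (wjoin x l - wjoin (xt k) (lt k)) \<bullet> (Q k *v (w k - wjoin (xt k) (lt k)))"
    and M_inv: "\<And>k. k \<le> t \<Longrightarrow> invertible (M k)"
    and H_def: "\<And>k. H k = Q k ** matrix_inv (M k)"
    and H_sym: "\<And>k. k \<le> t \<Longrightarrow> symmetric_mat (H k)"
    and H_pd: "\<And>k. k \<le> t \<Longrightarrow> pos_def_mat (H k)"
    and G_def: "\<And>k. G k = transpose (Q k) + Q k - beta *\<^sub>R (transpose (M k) ** H k ** M k)"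
    and G_pd: "\<And>k. k \<le> t \<Longrightarrow> pos_def_mat (G k)"
    and w_step: "\<And>k. k \<le> t \<Longrightarrow> w (Suc k) = w k - beta *\<^sub>R (M k *v (w k - wjoin (xt k) (lt k)))"
    and H_mono: "\<And>k. 1 \<le> k \<Longrightarrow> k \<le> t \<Longrightarrow> pos_semidef_mat (H (k - 1) - H k)"
  shows "(1 / (1 + real t)) *\<^sub>R (\<Sum>k\<le>t. wjoin (xt k) (lt k)) \<in> Omega X
    \<and> (\<forall>x l. wjoin x l \<in> Omega X \<longrightarrow>
        f ((1 / (1 + real t)) *\<^sub>R (\<Sum>k\<le>t. xt k)) - f x
        + ((1 / (1 + real t)) *\<^sub>R (\<Sum>k\<le>t. wjoin (xt k) (lt k)) - wjoin x l)
            \<bullet> Gamma Phi DPhi (wjoin x l)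
        \<le> 1 / (2 * beta * (1 + real t)) * wnorm2 (H 0) (wjoin x l - w 0))"
proof (intro conjI allI impI)
  have "(\<Sum>k\<le>t. (1 / (1 + real t)) *\<^sub>R wjoin (xt k) (lt k)) \<in> Omega X"
    using in_Omega by (intro convex_sum[OF _ convex_Omega[OF X_convex]]) auto
  then show "(1 / (1 + real t)) *\<^sub>R (\<Sum>k\<le>t. wjoin (xt k) (lt k)) \<in> Omega X"
    by (simp add: scaleR_sum_right)
next
  fix x :: "real^'n" and l :: "real^'m"
  assume w: "wjoin x l \<in> Omega X"
  define D where "D i j = wnorm2 (H i) (wjoin x l - w j)" for i j
  have gap: "f (xt k) - f x + (wjoin (xt k) (lt k) - wjoin x l) \<bullet> Gamma Phi DPhi (wjoin x l)
      \<le> 1 / (2 * beta) * (D k k - D k (Suc k))" if "k \<le> t" for k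
  proof -
    have QHM: "Q k = H k ** M k"
      using M_inv[OF that] by (simp add: H_def matrix_mul_assoc[symmetric] matrix_inv_left)
    have "pos_semidef_mat (transpose (Q k) + Q k - beta *\<^sub>R (transpose (M k) ** H k ** M k))"
      using G_pd[OF that] by (simp add: G_def pos_def_imp_pos_semidef_mat)
    then show ?thesis
      unfolding D_def
      by (rule iteration_gap_le[OF Phi_convex Phi_deriv beta_pos in_Omega[OF that] w VI[OF that w]
            H_sym[OF that] QHM _ w_step[OF that]])
  qed
  have "(\<Sum>k\<le>t. D k k - D k (Suc k)) \<le> D 0 0"
    unfolding D_def using H_mono[of "Suc _"] pos_def_imp_pos_semidef_mat[OF H_pd]
    by (intro sum_wnorm2_telescope_le) auto
  then have telescope: "(\<Sum>k\<le>t. 1 / (2 * beta) * (D k k - D k (Suc k))) \<le> 1 / (2 * beta) * D 0 0"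
    using beta_pos by (simp add: divide_right_mono flip: sum_divide_distrib)
  note convex_mean_gap_le[OF f_convex, of t xt x "\<lambda>k. wjoin (xt k) (lt k)" "wjoin x l"
      "Gamma Phi DPhi (wjoin x l)"]
  also have "(1 / (1 + real t)) * (\<Sum>k\<le>t. f (xt k) - f x
        + (wjoin (xt k) (lt k) - wjoin x l) \<bullet> Gamma Phi DPhi (wjoin x l))
      \<le> (1 / (1 + real t)) * (1 / (2 * beta) * D 0 0)"
    using order.trans[OF sum_mono[OF gap] telescope] by (intro mult_left_mono) auto
  also have "\<dots> = 1 / (2 * beta * (1 + real t)) * wnorm2 (H 0) (wjoin x l - w 0)"
    by (simp add: D_def)
  finally show "f ((1 / (1 + real t)) *\<^sub>R (\<Sum>k\<le>t. xt k)) - f x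
      + ((1 / (1 + real t)) *\<^sub>R (\<Sum>k\<le>t. wjoin (xt k) (lt k)) - wjoin x l)
          \<bullet> Gamma Phi DPhi (wjoin x l)
    \<le> 1 / (2 * beta * (1 + real t)) * wnorm2 (H 0) (wjoin x l - w 0)" .
qed

end
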